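(* Let $r\in(0,\infty)$, let $p\in(0,\infty)$, let $u\in\mathbb{S}^{n-1}$, let $H=\{x\in\mathbb{R}^n:\langle x,u\rangle=0\}$, and let $K\subset\mathbb{R}^n$ be a compact set with non-empty interior. Let $f:\mathbb{R}\to\mathbb{R}_{\geq0}$, $f(t)=\mathrm{vol}_{n-1}\bigl(K\cap(tu+H)\bigr)$, be $p$-concave with support $[a,b]$, and assume $\frac{\int_a^b t f(t)^r\,dt}{\int_a^b f(t)^r\,dt}=0$. Let $K^-=K\cap\{x:\langle x,u\rangle\leq0\}$. Then \[\frac{\mathrm{vol}(K^-)}{\mathrm{vol}(K)}\geq\left(\frac{p}{2p+r}\right)^{(p+1)/p}.\]
   Context: $\mathrm{vol}_k$ denotes $k$-dimensional Lebesgue measure, $\mathrm{vol}=\mathrm{vol}_n$. A function $\varphi\geq0$ is $p$-concave ($p>0$) if $\varphi((1-\lambda)x+\lambda y)\geq((1-\lambda)\varphi(x)^p+\lambda\varphi(y)^p)^{1/p}$ whenever $\varphi(x)\varphi(y)>0$, $\lambda\in(0,1)$. *)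

theory Defs
  imports "HOL-Analysis.Analysis"
begin

definition p_concave :: "real \<Rightarrow> (real \<Rightarrow> real) \<Rightarrow> bool" where
  "p_concave p \<phi> \<longleftrightarrow> (\<forall>x. \<phi> x \<ge> 0) \<and>
     (\<forall>x y l. \<phi> x * \<phi> y > 0 \<longrightarrow> 0 < l \<longrightarrow> l < 1 \<longrightarrow>
        \<phi> ((1 - l) * x + l * y) \<ge> ((1 - l) * \<phi> x powr p + l * \<phi> y powr p) powr (1 / p))"

definition fun_support :: "(real \<Rightarrow> real) \<Rightarrow> real set" where
  "fun_support \<phi> = closure {t. \<phi> t \<noteq> 0}"

end

theory Submission
  imports Defs
begin

text \<open>Identifying \<open>\<real> \<times> H\<close> with \<open>\<real>\<^sup>n\<close> by a linear isometry, Fubini shows that the section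
  function \<open>f\<close> integrates to \<open>vol K\<close> and its restriction to \<open>t \<le> 0\<close> to \<open>vol K\<^sup>-\<close>, so the claim is
  one-dimensional. By \<open>p\<close>-concavity \<open>f\<^sup>p\<close> is concave on the interior of the support \<open>[a, b]\<close>.
  Comparing with chords through \<open>b\<close> shows that \<open>f\<^sup>r / (b - t)\<^bsup>r/p\<^esup>\<close> is nondecreasing, which
  pushes the barycentre of \<open>f\<^sup>r\<close> at least the fraction \<open>c = p / (2p + r)\<close> of the way from \<open>a\<close> to \<open>b\<close>;
  as the barycentre is \<open>0\<close>, \<open>a + c (b - a) \<le> 0\<close>. Comparing with chords through \<open>a\<close> gives
  \<open>f (a + c (s - a)) \<ge> c\<^bsup>1/p\<^esup> f s\<close>, hence \<open>\<integral>\<^sub>a\<^bsup>a + c (b - a)\<^esup> f \<ge> c\<^bsup>(p+1)/p\<^esup> \<integral>\<^sub>a\<^sup>b f\<close>.\<close>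

section \<open>Linear isometries preserve Lebesgue measure\<close>

definition basis_map :: "('c::euclidean_space \<Rightarrow> 'd::real_vector) \<Rightarrow> 'c \<Rightarrow> 'd" where
  "basis_map \<tau> x = (\<Sum>b\<in>Basis. (x \<bullet> b) *\<^sub>R \<tau> b)"

lemma linear_basis_map: "linear (basis_map \<tau>)"
  unfolding basis_map_def[abs_def]
  by (rule linearI) (simp_all add: inner_add_left scaleR_add_left sum.distrib scaleR_sum_right)

lemma basis_map_inner_image:
  fixes \<tau> :: "'c::euclidean_space \<Rightarrow> 'd::euclidean_space"
  assumes \<tau>: "bij_betw \<tau> Basis Basis" and b: "b \<in> Basis"
  shows "basis_map \<tau> x \<bullet> \<tau> b = x \<bullet> b"
proof -
  have "basis_map \<tau> x \<bullet> \<tau> b = (\<Sum>b'\<in>Basis. (x \<bullet> b') * (\<tau> b' \<bullet> \<tau> b))"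
    by (simp add: basis_map_def inner_sum_left)
  also have "\<dots> = (\<Sum>b'\<in>Basis. if b' = b then x \<bullet> b else 0)"
  proof (rule sum.cong)
    fix b' :: 'c assume b': "b' \<in> Basis"
    with \<tau> b have "\<tau> b' \<in> Basis" "\<tau> b \<in> Basis" "\<tau> b' = \<tau> b \<longleftrightarrow> b' = b"
      by (auto simp: bij_betw_def inj_on_def)
    then show "(x \<bullet> b') * (\<tau> b' \<bullet> \<tau> b) = (if b' = b then x \<bullet> b else 0)"
      by (auto simp: inner_Basis)
  qed simp
  also have "\<dots> = x \<bullet> b" using b by simp
  finally show ?thesis .
qed

lemma basis_map_inner:
  fixes \<tau> :: "'c::euclidean_space \<Rightarrow> 'd::euclidean_space"
  assumes \<tau>: "bij_betw \<tau> Basis Basis"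
  shows "basis_map \<tau> x \<bullet> basis_map \<tau> y = x \<bullet> y"
proof -
  have "basis_map \<tau> x \<bullet> basis_map \<tau> y = (\<Sum>d\<in>Basis. (basis_map \<tau> x \<bullet> d) * (basis_map \<tau> y \<bullet> d))"
    by (rule euclidean_inner)
  also have "\<dots> = (\<Sum>b\<in>Basis. (basis_map \<tau> x \<bullet> \<tau> b) * (basis_map \<tau> y \<bullet> \<tau> b))"
    using sum.reindex_bij_betw[OF \<tau>, of "\<lambda>d. (basis_map \<tau> x \<bullet> d) * (basis_map \<tau> y \<bullet> d)"] by simp
  also have "\<dots> = (\<Sum>b\<in>Basis. (x \<bullet> b) * (y \<bullet> b))"
    using basis_map_inner_image[OF \<tau>] by simp
  also have "\<dots> = x \<bullet> y" by (rule euclidean_inner[symmetric])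
  finally show ?thesis .
qed

lemma norm_basis_map:
  fixes \<tau> :: "'c::euclidean_space \<Rightarrow> 'd::euclidean_space"
  assumes "bij_betw \<tau> Basis Basis"
  shows "norm (basis_map \<tau> x) = norm x"
  using basis_map_inner[OF assms, of x x] by (simp add: norm_eq_sqrt_inner)

lemma basis_map_inverse:
  fixes \<tau> :: "'c::euclidean_space \<Rightarrow> 'd::euclidean_space"
  assumes \<tau>: "bij_betw \<tau> Basis Basis"
  shows "basis_map (inv_into Basis \<tau>) (basis_map \<tau> x) = x"
proof (rule euclidean_eqI)
  fix b :: 'c assume b: "b \<in> Basis"
  have \<tau>b: "\<tau> b \<in> Basis" "inv_into Basis \<tau> (\<tau> b) = b"
    using \<tau> b by (auto simp: bij_betw_def)
  show "basis_map (inv_into Basis \<tau>) (basis_map \<tau> x) \<bullet> b = x \<bullet> b"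
    using basis_map_inner_image[OF bij_betw_inv_into[OF \<tau>] \<tau>b(1)] basis_map_inner_image[OF \<tau> b]
    by (simp add: \<tau>b(2))
qed

lemma distr_lborel_basis_map:
  fixes \<tau> :: "'c::euclidean_space \<Rightarrow> 'd::euclidean_space"
  assumes \<tau>: "bij_betw \<tau> Basis Basis"
  shows "distr lborel borel (basis_map \<tau>) = lborel"
proof (rule lborel_eqI[symmetric])
  have [measurable]: "basis_map \<tau> \<in> borel_measurable borel"
    by (intro borel_measurable_continuous_onI linear_continuous_on
        linear_conv_bounded_linear[THEN iffD1] linear_basis_map)
  fix l u :: 'd
  assume le: "\<And>d. d \<in> Basis \<Longrightarrow> l \<bullet> d \<le> u \<bullet> d"
  let ?\<sigma> = "inv_into Basis \<tau>"
  have \<sigma>: "bij_betw ?\<sigma> Basis Basis" by (rule bij_betw_inv_into[OF \<tau>])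
  have coord: "basis_map ?\<sigma> v \<bullet> b = v \<bullet> \<tau> b" if "b \<in> Basis" for v b
    using basis_map_inner_image[OF \<sigma>, of "\<tau> b" v] \<tau> that by (auto simp: bij_betw_def)
  have all_Basis: "(\<forall>d\<in>Basis. P d) \<longleftrightarrow> (\<forall>b\<in>Basis. P (\<tau> b))" for P
    using \<tau> by (auto simp: bij_betw_def) (metis image_iff)
  have "basis_map \<tau> -` box l u = box (basis_map ?\<sigma> l) (basis_map ?\<sigma> u)"
    by (auto simp: mem_box all_Basis basis_map_inner_image[OF \<tau>] coord)
  moreover have "\<forall>b\<in>Basis. l \<bullet> \<tau> b \<le> u \<bullet> \<tau> b"
    using le all_Basis[of "\<lambda>d. l \<bullet> d \<le> u \<bullet> d"] by blast
  ultimately have "emeasure (distr lborel borel (basis_map \<tau>)) (box l u)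
      = (\<Prod>b\<in>Basis. (u - l) \<bullet> \<tau> b)"
    using le by (simp add: emeasure_distr emeasure_lborel_box_eq coord inner_diff_left all_Basis)
  also have "\<dots> = (\<Prod>d\<in>Basis. (u - l) \<bullet> d)"
    using prod.reindex_bij_betw[OF \<tau>, of "\<lambda>d. (u - l) \<bullet> d"] by simp
  finally show "emeasure (distr lborel borel (basis_map \<tau>)) (box l u) = (\<Prod>d\<in>Basis. (u - l) \<bullet> d)" .
qed simp

lemma measure_basis_map_image:
  fixes \<tau> :: "'c::euclidean_space \<Rightarrow> 'd::euclidean_space"
  assumes \<tau>: "bij_betw \<tau> Basis Basis" and S: "compact S"
  shows "measure lborel (basis_map \<tau> ` S) = measure lborel S"
proof -
  have cont: "continuous_on UNIV (basis_map \<tau>)"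
    by (intro linear_continuous_on linear_conv_bounded_linear[THEN iffD1] linear_basis_map)
  then have [measurable]: "basis_map \<tau> \<in> borel_measurable borel"
    by (rule borel_measurable_continuous_onI)
  have "basis_map \<tau> ` S \<in> sets borel"
    using compact_continuous_image[OF continuous_on_subset[OF cont] S] by (simp add: borel_compact)
  moreover have "basis_map \<tau> -` basis_map \<tau> ` S = S"
    using basis_map_inverse[OF \<tau>] by (metis inj_on_inverseI inj_vimage_image_eq)
  ultimately show ?thesis
    using measure_distr[of "basis_map \<tau>" lborel borel "basis_map \<tau> ` S"]
    by (simp add: distr_lborel_basis_map[OF \<tau>])
qed

text \<open>The library proves invariance of Lebesgue measure under orthogonal maps only on
  \<open>real ^ 'n\<close> with a well-ordered index type \<open>'n\<close>; \<open>coord\<close> supplies one with \<open>DIM('a)\<close> elements.\<close>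

typedef (overloaded) ('a::euclidean_space) coord = "{..<DIM('a)}"
  by (rule exI[of _ 0]) simp

instantiation coord :: (euclidean_space) linorder
begin
definition less_eq_coord :: "'a coord \<Rightarrow> 'a coord \<Rightarrow> bool" where
  "x \<le> y \<longleftrightarrow> Rep_coord x \<le> Rep_coord y"
definition less_coord :: "'a coord \<Rightarrow> 'a coord \<Rightarrow> bool" where
  "x < y \<longleftrightarrow> Rep_coord x < Rep_coord y"
instance
  by standard (auto simp: less_eq_coord_def less_coord_def Rep_coord_inject)
end

instance coord :: (euclidean_space) "{finite, wellorder}"
proof
  show "finite (UNIV :: 'a coord set)"
    using type_definition.Abs_image[OF type_definition_coord] by (metis finite_lessThan finite_imageI)
next
  fix P :: "'a coord \<Rightarrow> bool" and x
  assume step: "\<And>x. (\<And>y. y < x \<Longrightarrow> P y) \<Longrightarrow> P x"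
  show "P x"
    by (induction "Rep_coord x" arbitrary: x rule: less_induct) (use step in \<open>auto simp: less_coord_def\<close>)
qed

lemma card_coord: "CARD('a::euclidean_space coord) = DIM('a)"
  using type_definition.card[OF type_definition_coord] by simp

lemma measure_linear_isometry_image:
  fixes \<Lambda> :: "'c::euclidean_space \<Rightarrow> 'a::euclidean_space"
  assumes lin: "linear \<Lambda>" and iso: "\<And>x. norm (\<Lambda> x) = norm x"
    and dim: "DIM('c) = DIM('a)" and S: "compact S"
  shows "measure lborel (\<Lambda> ` S) = measure lborel S"
proof -
  have same_dim: "DIM('a) = DIM(real ^ 'a coord)" "DIM('c) = DIM(real ^ 'a coord)"
    using dim by (simp_all add: card_coord)
  obtain \<tau>\<^sub>1 :: "'a \<Rightarrow> real ^ 'a coord" where \<tau>\<^sub>1: "bij_betw \<tau>\<^sub>1 Basis Basis"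
    using finite_same_card_bij[OF finite_Basis finite_Basis same_dim(1)] by blast
  obtain \<tau>\<^sub>2 :: "'c \<Rightarrow> real ^ 'a coord" where \<tau>\<^sub>2: "bij_betw \<tau>\<^sub>2 Basis Basis"
    using finite_same_card_bij[OF finite_Basis finite_Basis same_dim(2)] by blast
  let ?\<sigma> = "inv_into Basis \<tau>\<^sub>2"
  define M where "M = basis_map \<tau>\<^sub>1 \<circ> \<Lambda> \<circ> basis_map ?\<sigma>"
  have M: "orthogonal_transformation M"
    unfolding orthogonal_transformation M_def
    using \<tau>\<^sub>1 bij_betw_inv_into[OF \<tau>\<^sub>2] iso
    by (simp add: linear_compose linear_basis_map lin norm_basis_map)
  have cont: "continuous_on A L" if "linear L" for A and L :: "'x::euclidean_space \<Rightarrow> 'y::euclidean_space"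
    by (intro linear_continuous_on linear_conv_bounded_linear[THEN iffD1] that)
  have cS: "compact (\<Lambda> ` S)" "compact (basis_map \<tau>\<^sub>2 ` S)"
    by (intro compact_continuous_image S cont lin linear_basis_map)+
  have "measure lborel (\<Lambda> ` S) = measure lborel (basis_map \<tau>\<^sub>1 ` \<Lambda> ` S)"
    by (rule measure_basis_map_image[OF \<tau>\<^sub>1 cS(1), symmetric])
  also have "basis_map \<tau>\<^sub>1 ` \<Lambda> ` S = M ` basis_map \<tau>\<^sub>2 ` S"
    by (simp add: M_def image_image basis_map_inverse[OF \<tau>\<^sub>2])
  also have "measure lborel \<dots> = measure lebesgue (M ` basis_map \<tau>\<^sub>2 ` S)"
    using compact_continuous_image[OF cont cS(2), of M] M
    by (simp add: borel_compact orthogonal_transformation_linear)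
  also have "\<dots> = measure lebesgue (basis_map \<tau>\<^sub>2 ` S)"
    by (rule measure_orthogonal_image[OF M lmeasurable_compact[OF cS(2)]])
  also have "\<dots> = measure lborel S"
    using measure_basis_map_image[OF \<tau>\<^sub>2 S] cS(2) by (simp add: borel_compact)
  finally show ?thesis .
qed

section \<open>Slicing by parallel hyperplanes\<close>

lemma has_integral_measure_sections:
  fixes C :: "(real \<times> 'b::euclidean_space) set"
  assumes C: "compact C"
  shows "compact (Pair t -` C)"
    and "measure lborel (Pair t -` C) \<le> measure lborel (snd ` C)"
    and "(\<lambda>t. measure lborel (Pair t -` C)) \<in> borel_measurable borel"
    and "((\<lambda>t. measure lborel (Pair t -` C)) has_integral measure lborel C) UNIV"
proof -
  have section_compact: "compact (Pair t -` C)" for t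
  proof -
    have "Pair t -` C = snd ` (C \<inter> {t} \<times> UNIV)" by (auto intro: rev_image_eqI)
    moreover have "compact (snd ` (C \<inter> {t} \<times> UNIV))"
      by (intro compact_continuous_image compact_Int_closed C closed_Times closed_singleton
          closed_UNIV continuous_intros)
    ultimately show ?thesis by simp
  qed
  then show "compact (Pair t -` C)" .
  have "compact (snd ` C)"
    by (intro compact_continuous_image C continuous_intros)
  then show "measure lborel (Pair t -` C) \<le> measure lborel (snd ` C)"
    using section_compact[of t]
    by (intro measure_mono_fmeasurable fmeasurable_compact) (auto simp: borel_compact intro: rev_image_eqI)
  have C_sets: "C \<in> sets (lborel \<Otimes>\<^sub>M lborel)"
    unfolding lborel_prod using C by (simp add: borel_compact)
  have emeasure_section: "emeasure lborel (Pair t -` C) = ennreal (measure lborel (Pair t -` C))" for t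
    using emeasure_compact_finite[OF section_compact[of t]] by (simp add: emeasure_eq_ennreal_measure)
  have "(\<lambda>t. emeasure lborel (Pair t -` C)) \<in> borel_measurable lborel"
    by (rule lborel.measurable_emeasure_Pair[OF C_sets])
  then have "(\<lambda>t. enn2real (emeasure lborel (Pair t -` C))) \<in> borel_measurable lborel"
    by measurable
  then show meas: "(\<lambda>t. measure lborel (Pair t -` C)) \<in> borel_measurable borel"
    by (simp add: measure_def)
  have "(\<integral>\<^sup>+t. ennreal (measure lborel (Pair t -` C)) \<partial>lborel) = emeasure (lborel \<Otimes>\<^sub>M lborel) C"
    by (simp add: lborel.emeasure_pair_measure_alt[OF C_sets] emeasure_section)
  also have "\<dots> = ennreal (measure lborel C)"
    using emeasure_compact_finite[OF C] by (simp add: lborel_prod emeasure_eq_ennreal_measure)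
  finally show "((\<lambda>t. measure lborel (Pair t -` C)) has_integral measure lborel C) UNIV"
    by (intro nn_integral_has_integral meas) auto
qed

lemma line_hyperplane_isometry:
  fixes u :: "'a::euclidean_space" and g :: "'b::euclidean_space \<Rightarrow> 'a"
  assumes u: "norm u = 1" and g_lin: "linear g" and g_iso: "\<And>y. norm (g y) = norm y"
    and g_range: "range g = {x. x \<bullet> u = 0}"
  shows "linear (\<lambda>z. fst z *\<^sub>R u + g (snd z))"
    and "norm (fst z *\<^sub>R u + g (snd z)) = norm z"
    and "surj (\<lambda>z. fst z *\<^sub>R u + g (snd z))"
proof -
  show "linear (\<lambda>z. fst z *\<^sub>R u + g (snd z))"
    by (rule linearI)
      (simp_all add: linear_add[OF g_lin] linear_scale[OF g_lin] scaleR_add_left algebra_simps)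
  have uu: "u \<bullet> u = 1" using u by (simp add: norm_eq_sqrt_inner)
  have ug: "u \<bullet> g y = 0" for y
    using g_range by (auto simp: inner_commute)
  obtain t y where z: "z = (t, y)" by fastforce
  have "norm (t *\<^sub>R u + g y)^2 = (t *\<^sub>R u + g y) \<bullet> (t *\<^sub>R u + g y)"
    by (rule power2_norm_eq_inner)
  also have "\<dots> = t^2 * (u \<bullet> u) + 2 * t * (u \<bullet> g y) + g y \<bullet> g y"
    by (simp add: inner_add_left inner_add_right inner_commute power2_eq_square algebra_simps)
  also have "\<dots> = norm z ^ 2"
    using uu ug g_iso by (simp add: z norm_Pair power2_norm_eq_inner[symmetric])
  finally show "norm (fst z *\<^sub>R u + g (snd z)) = norm z"
    by (simp add: z power2_eq_iff_nonneg)
  show "surj (\<lambda>z. fst z *\<^sub>R u + g (snd z))"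
  proof (rule surjI)
    fix x :: 'a
    have "x - (x \<bullet> u) *\<^sub>R u \<in> range g" using g_range uu by (simp add: inner_diff_left)
    then show "fst (x \<bullet> u, inv g (x - (x \<bullet> u) *\<^sub>R u)) *\<^sub>R u + g (snd (x \<bullet> u, inv g (x - (x \<bullet> u) *\<^sub>R u))) = x"
      by (simp add: f_inv_into_f)
  qed
qed

lemma hyperplane_sections:
  fixes S :: "'a::euclidean_space set" and u :: 'a and g :: "'b::euclidean_space \<Rightarrow> 'a"
  assumes u: "norm u = 1" and dim: "DIM('b) + 1 = DIM('a)"
    and g_lin: "linear g" and g_iso: "\<And>y. norm (g y) = norm y"
    and g_range: "range g = {x. x \<bullet> u = 0}" and S: "compact S"
  obtains B where "\<And>t. compact {y. t *\<^sub>R u + g y \<in> S}"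
    and "\<And>t. measure lborel {y. t *\<^sub>R u + g y \<in> S} \<le> B"
    and "(\<lambda>t. measure lborel {y. t *\<^sub>R u + g y \<in> S}) \<in> borel_measurable borel"
    and "((\<lambda>t. measure lborel {y. t *\<^sub>R u + g y \<in> S}) has_integral measure lborel S) UNIV"
proof -
  define \<Lambda> where "\<Lambda> z = fst z *\<^sub>R u + g (snd z)" for z :: "real \<times> 'b"
  note \<Lambda> = line_hyperplane_isometry[OF u g_lin g_iso g_range, folded \<Lambda>_def]
  define C where "C = \<Lambda> -` S"
  have "closed C"
    unfolding C_def using S
    by (intro continuous_closed_vimage compact_imp_closed linear_continuous_at
        linear_conv_bounded_linear[THEN iffD1] \<Lambda>(1))
  moreover obtain R where R: "\<And>x. x \<in> S \<Longrightarrow> norm x \<le> R"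
    using compact_imp_bounded[OF S] by (auto simp: bounded_iff)
  have "bounded C"
    unfolding bounded_iff C_def using R \<Lambda>(2) by (metis vimageE)
  ultimately have C: "compact C" by (simp add: compact_eq_bounded_closed)
  have "measure lborel S = measure lborel (\<Lambda> ` C)"
    using \<Lambda>(3) by (simp add: C_def surj_image_vimage_eq)
  also have "\<dots> = measure lborel C"
    using measure_linear_isometry_image[OF \<Lambda>(1,2) _ C] dim by simp
  finally have "measure lborel C = measure lborel S" ..
  moreover have "Pair t -` C = {y. t *\<^sub>R u + g y \<in> S}" for t
    by (auto simp: C_def \<Lambda>_def)
  ultimately show ?thesis
    using has_integral_measure_sections[OF C] that[of "measure lborel (snd ` C)"] by simp
qed

lemma hyperplane_sections_halfspace:
  fixes u :: "'a::euclidean_space" and g :: "'b \<Rightarrow> 'a"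
  assumes u: "norm u = 1" and g_range: "range g = {x. x \<bullet> u = 0}"
  shows "{y. t *\<^sub>R u + g y \<in> S \<inter> {x. x \<bullet> u \<le> 0}} = (if t \<le> 0 then {y. t *\<^sub>R u + g y \<in> S} else {})"
proof -
  have "(t *\<^sub>R u + g y) \<bullet> u = t" for y
    using u g_range by (auto simp: inner_add_left dot_square_norm)
  then show ?thesis by auto
qed

lemma hyperplane_section_function:
  fixes K :: "'a::euclidean_space set" and u :: 'a and g :: "'b::euclidean_space \<Rightarrow> 'a"
    and f :: "real \<Rightarrow> real"
  assumes u: "norm u = 1" and dim: "DIM('b) + 1 = DIM('a)"
    and g_lin: "linear g" and g_iso: "\<And>y. norm (g y) = norm y"
    and g_range: "range g = {x. x \<bullet> u = 0}" and K: "compact K"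
    and f_def: "\<And>t. f t = measure lebesgue {y. t *\<^sub>R u + g y \<in> K}"
  obtains B where "\<And>t. f t \<le> B" and "f \<in> borel_measurable borel"
    and "(f has_integral measure lebesgue K) UNIV"
    and "((\<lambda>t. if t \<le> 0 then f t else 0) has_integral measure lebesgue (K \<inter> {x. x \<bullet> u \<le> 0})) UNIV"
proof -
  note sections = hyperplane_sections[OF u dim g_lin g_iso g_range]
  have lebesgue_eq: "measure lebesgue S = measure lborel S" if "compact S" for S :: "'x::euclidean_space set"
    using that by (simp add: borel_compact)
  have K_neg: "compact (K \<inter> {x. x \<bullet> u \<le> 0})"
    by (intro compact_Int_closed K closed_Collect_le continuous_intros)
  obtain B where compact_sections: "\<And>t. compact {y. t *\<^sub>R u + g y \<in> K}"
    and "\<And>t. measure lborel {y. t *\<^sub>R u + g y \<in> K} \<le> B"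
    and "(\<lambda>t. measure lborel {y. t *\<^sub>R u + g y \<in> K}) \<in> borel_measurable borel"
    and "((\<lambda>t. measure lborel {y. t *\<^sub>R u + g y \<in> K}) has_integral measure lborel K) UNIV"
    using sections[OF K] by blast
  moreover have f_eq: "f = (\<lambda>t. measure lborel {y. t *\<^sub>R u + g y \<in> K})"
    using compact_sections by (simp add: fun_eq_iff f_def lebesgue_eq)
  moreover have "(\<lambda>t. measure lborel {y. t *\<^sub>R u + g y \<in> K \<inter> {x. x \<bullet> u \<le> 0}})
      = (\<lambda>t. if t \<le> 0 then f t else 0)"
    using hyperplane_sections_halfspace[OF u g_range] by (auto simp: f_eq fun_eq_iff)
  ultimately show ?thesis
    using that sections[OF K_neg] K K_neg by (auto simp: lebesgue_eq)
qed

section \<open>\<open>p\<close>-concave functions on an interval\<close>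

lemma powr_inverse_le_iff:
  fixes x y p :: real
  assumes "0 < p" "0 \<le> x" "0 \<le> y"
  shows "x powr (1 / p) \<le> y \<longleftrightarrow> x \<le> y powr p"
proof -
  have "x powr (1 / p) \<le> y \<longleftrightarrow> (x powr (1 / p)) powr p \<le> y powr p"
    using assms by (smt (verit) powr_ge_zero powr_less_mono2)
  also have "(x powr (1 / p)) powr p = x"
    using assms by (simp add: powr_powr)
  finally show ?thesis .
qed

lemma p_concave_nonneg: "p_concave p f \<Longrightarrow> 0 \<le> f t"
  by (simp add: p_concave_def)

lemma p_concave_reflect:
  assumes "p_concave p f"
  shows "p_concave p (\<lambda>t. f (- t))"
proof -
  have "(1 - l) * - x + l * - y = - ((1 - l) * x + l * y)" for l x y :: real
    by algebra
  then show ?thesis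
    using assms unfolding p_concave_def by metis
qed

lemma p_concave_pos_interior:
  assumes conc: "p_concave p f" and supp: "fun_support f = {a..b}" and t: "a < t" "t < b"
  shows "0 < f t"
proof -
  define P where "P = {t. f t \<noteq> 0}"
  have "convex P"
    unfolding convex_alt
  proof (intro ballI allI impI)
    fix x y and l :: real
    assume x: "x \<in> P" and y: "y \<in> P" and l: "0 \<le> l \<and> l \<le> 1"
    show "(1 - l) *\<^sub>R x + l *\<^sub>R y \<in> P"
    proof (cases "l = 0 \<or> l = 1")
      case True
      then show ?thesis using x y by auto
    next
      case False
      have fxy: "0 < f x" "0 < f y"
        using x y p_concave_nonneg[OF conc] by (auto simp: P_def less_le)
      have "0 < (1 - l) * f x powr p + l * f y powr p"
        using fxy l False by (intro add_pos_pos mult_pos_pos) auto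
      then have "0 < ((1 - l) * f x powr p + l * f y powr p) powr (1 / p)" by simp
      also have "\<dots> \<le> f ((1 - l) * x + l * y)"
        using conc fxy l False unfolding p_concave_def by auto
      finally show ?thesis by (simp add: P_def)
    qed
  qed
  then have "interior P = interior {a..b}"
    using supp convex_interior_closure[of P] by (simp add: P_def fun_support_def)
  then have "t \<in> P" using t interior_subset[of P] by auto
  then show ?thesis using p_concave_nonneg[OF conc, of t] by (simp add: P_def)
qed

text \<open>Nothing is assumed about \<open>f e\<close>: the bound is the limit of the chords from \<open>z\<close> to \<open>s\<close>
  as \<open>z\<close> decreases to \<open>e\<close>.\<close>
lemma p_concave_endpoint_chord:
  fixes f :: "real \<Rightarrow> real"
  assumes p: "0 < p" and conc: "p_concave p f" and exs: "e < x" "x < s"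
    and pos: "\<And>z. e < z \<Longrightarrow> z < x \<Longrightarrow> 0 < f z"
  shows "(x - e) / (s - e) * f s powr p \<le> f x powr p"
proof (cases "f s = 0")
  case True
  then show ?thesis by simp
next
  case False
  then have fs: "0 < f s" using p_concave_nonneg[OF conc, of s] by simp
  have chord: "(x - z) / (s - z) * f s powr p \<le> f x powr p" if z: "e < z" "z < x" for z
  proof -
    define l where "l = (x - z) / (s - z)"
    have l: "0 < l" "l < 1" using z exs by (auto simp: l_def field_simps)
    have "l * (s - z) = x - z" using z exs by (simp add: l_def)
    then have x_eq: "(1 - l) * z + l * s = x" by (simp add: algebra_simps)
    have fz: "0 < f z" using pos z .
    have "((1 - l) * f z powr p + l * f s powr p) powr (1 / p) \<le> f x"
      using conc fz fs l unfolding p_concave_def x_eq[symmetric] by auto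
    then have "(1 - l) * f z powr p + l * f s powr p \<le> f x powr p"
      using p l p_concave_nonneg[OF conc, of x] by (simp add: powr_inverse_le_iff)
    moreover have "0 \<le> (1 - l) * f z powr p" using l by simp
    ultimately show ?thesis by (simp add: l_def)
  qed
  have "((\<lambda>z. (x - z) / (s - z) * f s powr p) \<longlongrightarrow> (x - e) / (s - e) * f s powr p) (at_right e)"
    using exs by (intro tendsto_intros) auto
  moreover have "\<forall>\<^sub>F z in at_right e. (x - z) / (s - z) * f s powr p \<le> f x powr p"
  proof (rule eventually_at_rightI[of e x])
    show "(x - z) / (s - z) * f s powr p \<le> f x powr p" if "z \<in> {e<..<x}" for z
      using chord that by simp
  qed (rule exs(1))
  ultimately show ?thesis
    by (rule tendsto_upperbound) simp
qed

lemma p_concave_ratio_mono: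
  fixes f :: "real \<Rightarrow> real"
  assumes p: "0 < p" and conc: "p_concave p f" and ts: "t < s" "s < b"
    and pos: "\<And>z. t < z \<Longrightarrow> z < b \<Longrightarrow> 0 < f z"
  shows "f t powr p * (b - s) \<le> f s powr p * (b - t)"
proof -
  have "(- s - - b) / (- t - - b) * f (- (- t)) powr p \<le> f (- (- s)) powr p"
    by (rule p_concave_endpoint_chord[OF p p_concave_reflect[OF conc]]) (use ts pos in auto)
  then show ?thesis using ts by (simp add: field_simps)
qed

lemma p_concave_scaling:
  fixes f :: "real \<Rightarrow> real"
  assumes p: "0 < p" and conc: "p_concave p f" and s: "a \<le> s" and l: "0 < l" "l \<le> 1"
    and pos: "\<And>z. a < z \<Longrightarrow> z < s \<Longrightarrow> 0 < f z"
  shows "l powr (1 / p) * f s \<le> f (a + l * (s - a))"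
proof (cases "l = 1 \<or> s = a")
  case True
  have "l powr (1 / p) * f s \<le> f s"
    using l p p_concave_nonneg[OF conc, of s] by (intro mult_left_le_one_le powr_le1) auto
  with True show ?thesis by auto
next
  case False
  define x where "x = a + l * (s - a)"
  have "l * (s - a) < s - a" "0 < l * (s - a)" using False l s by auto
  then have ax: "a < x" "x < s" unfolding x_def by linarith+
  have "(x - a) / (s - a) * f s powr p \<le> f x powr p"
    by (rule p_concave_endpoint_chord[OF p conc ax]) (use pos ax in auto)
  then have "l * f s powr p \<le> f x powr p" using ax by (simp add: x_def)
  then have "(l * f s powr p) powr (1 / p) \<le> f x"
    using p l p_concave_nonneg[OF conc] by (simp add: powr_inverse_le_iff)
  then show ?thesis
    using p l p_concave_nonneg[OF conc, of s] by (simp add: powr_mult powr_powr x_def)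
qed

section \<open>The barycentre estimate\<close>

lemma has_integral_powr_distance_to_endpoint:
  fixes a b \<gamma> :: real
  assumes "-1 < \<gamma>" "a \<le> b"
  shows "((\<lambda>t. (b - t) powr \<gamma>) has_integral (b - a) powr (\<gamma> + 1) / (\<gamma> + 1)) {a..b}"
proof -
  have "((\<lambda>x. x powr \<gamma>) has_integral (b - a) powr (\<gamma> + 1) / (\<gamma> + 1)) {0..b - a}"
    using assms by (intro has_integral_powr_from_0) auto
  from has_integral_reflect_lemma_real[OF this]
  have "((\<lambda>x. (- x) powr \<gamma>) has_integral (b - a) powr (\<gamma> + 1) / (\<gamma> + 1)) {- (b - a)..- 0}"
    by simp
  from has_integral_shift_real_ivl[OF this, of "- b"] show ?thesis
    by simp
qed

lemma has_integral_barycenter_powr_weight: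
  fixes a b \<beta> :: real
  assumes \<beta>: "-1 < \<beta>" and ab: "a \<le> b"
  shows "((\<lambda>t. (t - (a + (b - a) / (\<beta> + 2))) * (b - t) powr \<beta>) has_integral 0) {a..b}"
proof -
  define D where "D = b - a"
  define m where "m = a + D / (\<beta> + 2)"
  have D: "0 \<le> D" using ab by (simp add: D_def)
  have int: "((\<lambda>t. (b - m) * (b - t) powr \<beta> - (b - t) powr (\<beta> + 1)) has_integral
         (b - m) * (D powr (\<beta> + 1) / (\<beta> + 1)) - D powr (\<beta> + 2) / (\<beta> + 2)) {a..b}"
    using has_integral_powr_distance_to_endpoint[OF _ ab, of \<beta>]
      has_integral_powr_distance_to_endpoint[OF _ ab, of "\<beta> + 1"] \<beta>
    by (intro has_integral_diff has_integral_mult_right) (simp_all add: D_def add.assoc)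
  have total: "(b - m) * (D powr (\<beta> + 1) / (\<beta> + 1)) - D powr (\<beta> + 2) / (\<beta> + 2) = 0"
  proof -
    have nz: "\<beta> + 1 \<noteq> 0" "\<beta> + 2 \<noteq> 0" "(\<beta> + 1) * (\<beta> + 2) \<noteq> 0"
      using \<beta> by auto
    have bm: "b - m = D - D / (\<beta> + 2)" by (simp add: m_def D_def)
    have "D powr (\<beta> + 2) = D powr (\<beta> + 1) * D"
      using D powr_add[of D "\<beta> + 1" 1] by (simp add: add.assoc)
    then show ?thesis unfolding bm using nz by (simp add: field_simps)
  qed
  have "(b - m) * (b - t) powr \<beta> - (b - t) powr (\<beta> + 1) = (t - m) * (b - t) powr \<beta>"
    if "t \<in> {a..b}" for t
    using that powr_add[of "b - t" \<beta> 1] by (simp add: algebra_simps)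
  from has_integral_eq[OF this int] show ?thesis
    unfolding total by (simp add: m_def D_def)
qed

lemma barycenter_ge_of_ratio_mono:
  fixes h :: "real \<Rightarrow> real" and a b \<beta> I\<^sub>0 I\<^sub>1 :: real
  assumes \<beta>: "-1 < \<beta>" and ab: "a < b"
    and h: "(h has_integral I\<^sub>0) {a..b}" and th: "((\<lambda>t. t * h t) has_integral I\<^sub>1) {a..b}"
    and h_nonneg: "\<And>t. t \<in> {a..b} \<Longrightarrow> 0 \<le> h t"
    and mono: "\<And>t s. a \<le> t \<Longrightarrow> t < s \<Longrightarrow> s < b \<Longrightarrow> h t * (b - s) powr \<beta> \<le> h s * (b - t) powr \<beta>"
  shows "(a + (b - a) / (\<beta> + 2)) * I\<^sub>0 \<le> I\<^sub>1"
proof -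
  define m where "m = a + (b - a) / (\<beta> + 2)"
  define K where "K = (b - m) powr \<beta>"
  have "(b - a) * 1 < (b - a) * (\<beta> + 2)"
    using \<beta> ab by (intro mult_strict_left_mono) auto
  moreover have \<beta>2: "0 < \<beta> + 2" using \<beta> by simp
  ultimately have "(b - a) / (\<beta> + 2) < b - a" "0 < (b - a) / (\<beta> + 2)"
    using ab by (simp_all add: pos_divide_less_eq[OF \<beta>2])
  then have am: "a < m" "m < b" by (simp_all add: m_def)
  have K: "0 < K" using am by (simp add: K_def)
  \<comment> \<open>\<open>Q \<ge> 0\<close> by monotonicity of \<open>h t / (b - t)\<^sup>\<beta>\<close>, and the weight \<open>(t - m) (b - t)\<^sup>\<beta>\<close> in it has integral \<open>0\<close>.\<close>
  define Q where "Q t = (t - m) * (h t * K - h m * (b - t) powr \<beta>)" for t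
  have Q_nonneg: "0 \<le> Q t" if t: "t \<in> {a..b}" for t
  proof -
    consider "t < m" | "t = m" | "m < t" "t < b" | "t = b" using t by fastforce
    then show ?thesis
    proof cases
      case 1
      then have "h t * K \<le> h m * (b - t) powr \<beta>" using mono[of t m] t am by (simp add: K_def)
      then show ?thesis using 1 by (simp add: Q_def mult_nonpos_nonpos)
    next
      case 3
      then have "h m * (b - t) powr \<beta> \<le> h t * K" using mono[of m t] am by (simp add: K_def)
      then show ?thesis using 3 by (simp add: Q_def)
    qed (use am h_nonneg K in \<open>auto simp: Q_def\<close>)
  qed
  have "(Q has_integral K * I\<^sub>1 - K * m * I\<^sub>0 - h m * 0) {a..b}"
  proof -
    have "((\<lambda>t. K * (t * h t) - K * m * h t - h m * ((t - m) * (b - t) powr \<beta>)) has_integral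
          K * I\<^sub>1 - K * m * I\<^sub>0 - h m * 0) {a..b}"
      using has_integral_barycenter_powr_weight[OF \<beta> less_imp_le[OF ab]]
      by (intro has_integral_diff has_integral_mult_right h th) (simp add: m_def)
    then show ?thesis by (simp add: Q_def[abs_def] algebra_simps)
  qed
  from has_integral_nonneg[OF this Q_nonneg] have "K * (m * I\<^sub>0) \<le> K * I\<^sub>1"
    by (simp add: algebra_simps)
  then show ?thesis using K by (simp add: m_def)
qed

lemma integral_pos_of_ratio_mono:
  fixes h :: "real \<Rightarrow> real" and a b \<beta> t\<^sub>0 :: real
  assumes \<beta>: "0 \<le> \<beta>" and h: "h integrable_on {a..b}"
    and h_nonneg: "\<And>t. t \<in> {a..b} \<Longrightarrow> 0 \<le> h t"
    and mono: "\<And>t s. a \<le> t \<Longrightarrow> t < s \<Longrightarrow> s < b \<Longrightarrow> h t * (b - s) powr \<beta> \<le> h s * (b - t) powr \<beta>"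
    and t\<^sub>0: "a \<le> t\<^sub>0" "t\<^sub>0 < b" "0 < h t\<^sub>0"
  shows "0 < integral {a..b} h"
proof -
  define x\<^sub>0 where "x\<^sub>0 = (2 * t\<^sub>0 + b) / 3"
  define x\<^sub>1 where "x\<^sub>1 = (t\<^sub>0 + 2 * b) / 3"
  define \<kappa> where "\<kappa> = h t\<^sub>0 / 3 powr \<beta>"
  have x: "t\<^sub>0 < x\<^sub>0" "x\<^sub>0 < x\<^sub>1" "x\<^sub>1 < b" using t\<^sub>0 by (auto simp: x\<^sub>0_def x\<^sub>1_def)
  have lower: "\<kappa> \<le> h s" if s: "s \<in> {x\<^sub>0..x\<^sub>1}" for s
  proof -
    have "((b - t\<^sub>0) / 3) powr \<beta> \<le> (b - s) powr \<beta>"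
      using s \<beta> x by (intro powr_mono2) (auto simp: x\<^sub>1_def)
    then have "(b - t\<^sub>0) powr \<beta> / 3 powr \<beta> \<le> (b - s) powr \<beta>"
      using t\<^sub>0 x by (simp add: powr_divide)
    have "\<kappa> * (b - t\<^sub>0) powr \<beta> = h t\<^sub>0 * ((b - t\<^sub>0) powr \<beta> / 3 powr \<beta>)"
      by (simp add: \<kappa>_def algebra_simps)
    also have "\<dots> \<le> h t\<^sub>0 * (b - s) powr \<beta>"
      by (rule mult_left_mono) (use t\<^sub>0 \<open>_ / 3 powr \<beta> \<le> _\<close> in simp_all)
    also have "\<dots> \<le> h s * (b - t\<^sub>0) powr \<beta>"
      using mono[of t\<^sub>0 s] s x t\<^sub>0 by simp
    finally show ?thesis
      by (rule mult_right_le_imp_le) (use t\<^sub>0 in simp)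
  qed
  have h_sub: "h integrable_on {x\<^sub>0..x\<^sub>1}"
    by (rule integrable_subinterval_real[OF h]) (use x t\<^sub>0 in auto)
  have "0 < \<kappa> * (x\<^sub>1 - x\<^sub>0)" using x t\<^sub>0 by (simp add: \<kappa>_def)
  also have "\<dots> = integral {x\<^sub>0..x\<^sub>1} (\<lambda>_. \<kappa>)" using x by simp
  also have "\<dots> \<le> integral {x\<^sub>0..x\<^sub>1} h"
    using lower by (intro integral_le h_sub) auto
  also have "\<dots> \<le> integral {a..b} h"
    by (rule integral_subset_le[OF _ h_sub h]) (use x t\<^sub>0 h_nonneg in auto)
  finally show ?thesis .
qed

lemma integral_ge_of_scaling:
  fixes f :: "real \<Rightarrow> real" and a b k l :: real
  assumes f: "f integrable_on {a..b}" and ab: "a \<le> b" and l: "0 < l" "l \<le> 1"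
    and scale: "\<And>s. s \<in> {a..b} \<Longrightarrow> k * f s \<le> f (a + l * (s - a))"
  shows "l * k * integral {a..b} f \<le> integral {a..a + l * (b - a)} f"
proof -
  define d where "d = a + l * (b - a)"
  have "l * (b - a) \<le> b - a"
    using ab l by (intro mult_left_le_one_le) auto
  then have "f integrable_on {a..d}"
    by (intro integrable_subinterval_real[OF f]) (auto simp: d_def)
  then have "(f has_integral integral {a..d} f) (cbox a d)" by (simp add: has_integral_integral)
  from has_integral_affinity'[OF this l(1), of "a - l * a"]
  have scaled: "((\<lambda>s. f (a + l * (s - a))) has_integral integral {a..d} f / l) {a..b}"
    using l by (simp add: d_def algebra_simps inverse_eq_divide)
  have "((\<lambda>s. k * f s) has_integral k * integral {a..b} f) {a..b}"
    using f by (intro has_integral_mult_right integrable_integral)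
  from has_integral_le[OF this scaled scale]
  have "k * integral {a..b} f \<le> integral {a..d} f / l" .
  then show ?thesis using l by (simp add: d_def field_simps)
qed

section \<open>The one-dimensional inequality\<close>

lemma integrable_on_Icc_if_bounded_borel:
  fixes h :: "real \<Rightarrow> real"
  assumes "h \<in> borel_measurable borel" and "\<And>t. t \<in> {a..b} \<Longrightarrow> \<bar>h t\<bar> \<le> B"
  shows "h integrable_on {a..b}"
proof (rule measurable_bounded_by_integrable_imp_integrable)
  show "h \<in> borel_measurable (lebesgue_on {a..b})"
    using assms(1) by (intro measurable_restrict_space1 measurable_completion) simp
qed (use assms(2) in auto)

lemma p_concave_barycenter_lower_bound:
  fixes f :: "real \<Rightarrow> real" and r p a b :: real
  assumes r: "0 < r" and p: "0 < p" and conc: "p_concave p f"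
    and supp: "fun_support f = {a..b}" and ab: "a < b"
    and h: "(\<lambda>t. f t powr r) integrable_on {a..b}"
    and th: "(\<lambda>t. t * f t powr r) integrable_on {a..b}"
  shows "0 < integral {a..b} (\<lambda>t. f t powr r)"
    and "(a + p / (2 * p + r) * (b - a)) * integral {a..b} (\<lambda>t. f t powr r)
           \<le> integral {a..b} (\<lambda>t. t * f t powr r)"
proof -
  have pos: "0 < f t" if "a < t" "t < b" for t
    using p_concave_pos_interior[OF conc supp that] .
  define \<beta> where "\<beta> = r / p"
  have \<beta>: "0 < \<beta>" using r p by (simp add: \<beta>_def)
  have mono: "f t powr r * (b - s) powr \<beta> \<le> f s powr r * (b - t) powr \<beta>"
    if "a \<le> t" "t < s" "s < b" for t s
  proof -
    have "(f t powr p * (b - s)) powr \<beta> \<le> (f s powr p * (b - t)) powr \<beta>"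
      using p_concave_ratio_mono[OF p conc, of t s b] pos that \<beta>
      by (intro powr_mono2) auto
    then show ?thesis using that p by (simp add: powr_mult powr_powr \<beta>_def)
  qed
  show "0 < integral {a..b} (\<lambda>t. f t powr r)"
    using \<beta> ab pos[of "(a + b) / 2"]
    by (intro integral_pos_of_ratio_mono[OF _ h _ mono, of "(a + b) / 2"]) auto
  have "p / (2 * p + r) = 1 / (\<beta> + 2)"
    using r p by (simp add: \<beta>_def field_simps)
  then show "(a + p / (2 * p + r) * (b - a)) * integral {a..b} (\<lambda>t. f t powr r)
      \<le> integral {a..b} (\<lambda>t. t * f t powr r)"
    using \<beta> barycenter_ge_of_ratio_mono[OF _ ab integrable_integral[OF h] integrable_integral[OF th] _ mono]
    by simp
qed

lemma p_concave_mass_initial_segment: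
  fixes f :: "real \<Rightarrow> real" and p a b c :: real
  assumes p: "0 < p" and conc: "p_concave p f" and supp: "fun_support f = {a..b}"
    and f: "f integrable_on {a..b}" and ab: "a \<le> b" and c: "0 < c" "c \<le> 1"
  shows "c powr ((p + 1) / p) * integral {a..b} f \<le> integral {a..a + c * (b - a)} f"
proof -
  have "c * c powr (1 / p) * integral {a..b} f \<le> integral {a..a + c * (b - a)} f"
  proof (rule integral_ge_of_scaling[OF f ab c])
    show "c powr (1 / p) * f s \<le> f (a + c * (s - a))" if "s \<in> {a..b}" for s
      using that p_concave_pos_interior[OF conc supp]
      by (intro p_concave_scaling[OF p conc _ c]) auto
  qed
  moreover have "c powr ((p + 1) / p) = c * c powr (1 / p)"
    using c p by (simp add: add_divide_distrib powr_add)
  ultimately show ?thesis by simp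
qed

theorem p_concave_mass_left_of_barycenter:
  fixes f :: "real \<Rightarrow> real" and r p a b B :: real
  assumes r: "0 < r" and p: "0 < p" and conc: "p_concave p f"
    and supp: "fun_support f = {a..b}"
    and f_meas: "f \<in> borel_measurable borel" and f_bound: "\<And>t. f t \<le> B"
    and mass: "0 < integral {a..b} f"
    and bary: "integral {a..b} (\<lambda>t. t * f t powr r) / integral {a..b} (\<lambda>t. f t powr r) = 0"
  shows "(p / (2 * p + r)) powr ((p + 1) / p) * integral {a..b} f \<le> integral {a..min 0 b} f"
proof -
  define c where "c = p / (2 * p + r)"
  have c: "0 < c" "c \<le> 1" using r p by (auto simp: c_def)
  have f_nonneg: "0 \<le> f t" for t
    using p_concave_nonneg[OF conc] .
  have bounds: "\<bar>f t\<bar> \<le> B" "\<bar>f t powr r\<bar> \<le> B powr r" "\<bar>t * f t powr r\<bar> \<le> (\<bar>a\<bar> + \<bar>b\<bar>) * B powr r"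
    if "t \<in> {a..b}" for t
    using that r f_bound f_nonneg by (auto simp: abs_mult intro!: powr_mono2 mult_mono)
  note [measurable] = f_meas
  have f: "f integrable_on {a..b}" and h: "(\<lambda>t. f t powr r) integrable_on {a..b}"
    and th: "(\<lambda>t. t * f t powr r) integrable_on {a..b}"
    by (rule integrable_on_Icc_if_bounded_borel[OF _ bounds(1)], measurable)
      (rule integrable_on_Icc_if_bounded_borel[OF _ bounds(2)], measurable,
       rule integrable_on_Icc_if_bounded_borel[OF _ bounds(3)], measurable)
  have ab: "a < b"
    using mass by (metis content_real_eq_0 integral_null interval_cbox less_irrefl not_le)
  note barycenter = p_concave_barycenter_lower_bound[OF r p conc supp ab h th]
  have "a + c * (b - a) \<le> 0"
    using barycenter bary by (simp add: c_def mult_le_0_iff)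
  moreover have "c * (b - a) \<le> b - a"
    using c ab by (intro mult_left_le_one_le) auto
  ultimately have "{a..a + c * (b - a)} \<subseteq> {a..min 0 b}" "{a..min 0 b} \<subseteq> {a..b}"
    by auto
  then have "integral {a..a + c * (b - a)} f \<le> integral {a..min 0 b} f"
    using f_nonneg by (intro integral_subset_le integrable_subinterval_real[OF f]) auto
  with p_concave_mass_initial_segment[OF p conc supp f less_imp_le[OF ab] c]
  show ?thesis by (simp add: c_def)
qed

lemma measure_pos_if_interior_nonempty:
  fixes K :: "'a::euclidean_space set"
  assumes "compact K" "interior K \<noteq> {}"
  shows "0 < measure lebesgue K"
proof -
  obtain x e where "0 < e" "ball x e \<subseteq> K"
    using assms(2) by (auto simp: mem_interior)
  then have "measure lborel (ball x e) \<le> measure lborel K"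
    using assms(1) by (intro measure_mono_fmeasurable) (auto intro: fmeasurable_compact)
  with content_ball_pos[OF \<open>0 < e\<close>, of x] have "0 < measure lborel K"
    by linarith
  with assms(1) show ?thesis
    by (simp add: borel_compact)
qed

theorem corollary2p2:
  fixes K :: "'a::euclidean_space set" and u :: 'a
    and g :: "'b::euclidean_space \<Rightarrow> 'a"
    and f :: "real \<Rightarrow> real" and r p a b :: real
  assumes r: "r > 0" and p: "p > 0"
    and u: "norm u = 1"
    and dim: "DIM('b) + 1 = DIM('a)"
    and g_lin: "linear g" and g_iso: "\<And>y. norm (g y) = norm y"
    and g_range: "range g = {x. x \<bullet> u = 0}"
    and K: "compact K" "interior K \<noteq> {}"
    and f_def: "\<And>t. f t = measure lebesgue {y. t *\<^sub>R u + g y \<in> K}"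
    and f_conc: "p_concave p f"
    and f_supp: "fun_support f = {a..b}"
    and bary: "integral {a..b} (\<lambda>t. t * f t powr r) / integral {a..b} (\<lambda>t. f t powr r) = 0"
  shows "measure lebesgue (K \<inter> {x. x \<bullet> u \<le> 0}) / measure lebesgue K
           \<ge> (p / (2 * p + r)) powr ((p + 1) / p)"
proof -
  obtain B where f_bound: "\<And>t. f t \<le> B" and f_meas: "f \<in> borel_measurable borel"
    and "(f has_integral measure lebesgue K) UNIV"
    and "((\<lambda>t. if t \<le> 0 then f t else 0) has_integral measure lebesgue (K \<inter> {x. x \<bullet> u \<le> 0})) UNIV"
    using hyperplane_section_function[OF u dim g_lin g_iso g_range K(1) f_def] by blast
  moreover have "f t = 0" if "t \<notin> {a..b}" for t
    using that closure_subset[of "{t. f t \<noteq> 0}"] f_supp by (auto simp: fun_support_def)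
  then have "(\<lambda>t. if t \<in> {a..b} then f t else 0) = f"
    and "(\<lambda>t. if t \<in> {a..min 0 b} then f t else 0) = (\<lambda>t. if t \<le> 0 then f t else 0)"
    by auto
  ultimately have vol_K: "integral {a..b} f = measure lebesgue K"
    and vol_K_neg: "integral {a..min 0 b} f = measure lebesgue (K \<inter> {x. x \<bullet> u \<le> 0})"
    by (metis has_integral_restrict_UNIV integral_unique)+
  have vol_pos: "0 < measure lebesgue K"
    by (rule measure_pos_if_interior_nonempty[OF K])
  have "(p / (2 * p + r)) powr ((p + 1) / p) * integral {a..b} f \<le> integral {a..min 0 b} f"
    using vol_K vol_pos
    by (intro p_concave_mass_left_of_barycenter[OF r p f_conc f_supp f_meas f_bound _ bary]) simp
  then show ?thesis
    using vol_K vol_K_neg vol_pos by (simp add: pos_le_divide_eq)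
qed

end
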